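(* Let $\mu>0$, $L>0$, let $g:\mathbb{R}^n\to\mathbb{R}$ be $\mu$-strongly convex and $(L+\mu)$-smooth, let $h$ be proper closed convex, $\psi=g+h$, and run the ACG method (see context) from $x_0\in\mathbb{R}^n$. Then for every $j\ge0$: (a) $\gamma_j\le\tilde\gamma_j\le\psi$, $\tilde\gamma_j(\tilde y_{j+1})=\gamma_j(\tilde y_{j+1})$, and $$\min_{u\in\mathbb{R}^n}\left\{\tilde\gamma_j(u)+\tfrac L2\|u-\tilde x_j\|^2\right\}=\min_{u\in\mathbb{R}^n}\left\{\gamma_j(u)+\tfrac L2\|u-\tilde x_j\|^2\right\},$$ with both minimization problems having $\tilde y_{j+1}$ as unique optimal solution; (b) $\gamma_j$ and $\Gamma_{j+1}$ are $\mu$-strongly convex quadratic functions; (c) $x_j=\mathrm{argmin}_{u\in\mathbb{R}^n}\{A_j\Gamma_j(u)+\|u-x_0\|^2/2\}$.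
   Context: $\ell_g(u;x)=g(x)+\langle\nabla g(x),u-x\rangle$. ACG method: $A_0=0$, $\tau_0=1/L$, $y_0=x_0$; for $j\ge0$: $a_j=\frac{\tau_j+\sqrt{\tau_j^2+4\tau_jA_j}}{2}$, $\tau_{j+1}=\tau_j+\mu a_j/L$, $A_{j+1}=A_j+a_j$, $\tilde x_j=\frac{A_j}{A_{j+1}}y_j+\frac{a_j}{A_{j+1}}x_j$; $\tilde y_{j+1}=\mathrm{argmin}_u\{\ell_g(u;\tilde x_j)+h(u)+\frac{L+\mu}{2}\|u-\tilde x_j\|^2\}$; $y_{j+1}\in\mathrm{Argmin}\{\psi(u):u\in\{y_j,\tilde y_{j+1}\}\}$; $x_{j+1}=\frac{(L+\mu)a_j\tilde y_{j+1}-\frac{A_ja_jL}{A_{j+1}}y_j}{A_{j+1}\mu+1}$. Define $\tilde\gamma_j(u)=\ell_g(u;\tilde x_j)+h(u)+\frac\mu2\|u-\tilde x_j\|^2$, $\gamma_j(u)=\tilde\gamma_j(\tilde y_{j+1})+L\langle\tilde x_j-\tilde y_{j+1},u-\tilde y_{j+1}\rangle+\frac\mu2\|u-\tilde y_{j+1}\|^2$, $\Gamma_0\equiv0$, $\Gamma_{j+1}=(A_j\Gamma_j+a_j\gamma_j)/A_{j+1}$. *)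

theory Defs
  imports "HOL-Analysis.Analysis"
begin

definition strongly_convex :: "real \<Rightarrow> ('a::real_inner \<Rightarrow> real) \<Rightarrow> bool" where
  "strongly_convex \<mu> f \<longleftrightarrow>
     (\<forall>x y t. 0 \<le> t \<and> t \<le> 1 \<longrightarrow>
        f (t *\<^sub>R x + (1 - t) *\<^sub>R y)
          \<le> t * f x + (1 - t) * f y - t * (1 - t) * (\<mu> / 2) * (norm (x - y))\<^sup>2)"

definition smooth_with_gradient :: "real \<Rightarrow> ('a::real_inner \<Rightarrow> real) \<Rightarrow> ('a \<Rightarrow> 'a) \<Rightarrow> bool" where
  "smooth_with_gradient M f f' \<longleftrightarrow>
     (\<forall>x. GDERIV f x :> f' x) \<and> (\<forall>x y. norm (f' x - f' y) \<le> M * norm (x - y))"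

definition proper_closed_convex :: "('a::real_normed_vector \<Rightarrow> ereal) \<Rightarrow> bool" where
  "proper_closed_convex h \<longleftrightarrow>
     (\<forall>x. h x \<noteq> -\<infinity>) \<and> (\<exists>x. h x \<noteq> \<infinity>) \<and>
     (\<forall>x y t. 0 < t \<and> t < 1 \<longrightarrow>
        h (t *\<^sub>R x + (1 - t) *\<^sub>R y) \<le> ereal t * h x + ereal (1 - t) * h y) \<and>
     closed {(x, r::real). h x \<le> ereal r}"

definition quadratic_fun :: "('a::real_inner \<Rightarrow> real) \<Rightarrow> bool" where
  "quadratic_fun f \<longleftrightarrow>
     (\<exists>Q b c. linear Q \<and> (\<forall>x y. inner (Q x) y = inner x (Q y)) \<and>
        (\<forall>u. f u = c + inner b u + inner u (Q u) / 2))"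

definition lin_approx :: "('a::real_inner \<Rightarrow> real) \<Rightarrow> ('a \<Rightarrow> 'a) \<Rightarrow> 'a \<Rightarrow> 'a \<Rightarrow> real" where
  "lin_approx g g' x u = g x + inner (g' x) (u - x)"

definition psi :: "('a \<Rightarrow> real) \<Rightarrow> ('a \<Rightarrow> ereal) \<Rightarrow> 'a \<Rightarrow> ereal" where
  "psi g h u = ereal (g u) + h u"

text \<open>tilde gamma_j, with xt = tilde x_j\<close>
definition gamma_tilde :: "real \<Rightarrow> ('a::real_inner \<Rightarrow> real) \<Rightarrow> ('a \<Rightarrow> 'a) \<Rightarrow> ('a \<Rightarrow> ereal) \<Rightarrow> 'a \<Rightarrow> 'a \<Rightarrow> ereal" where
  "gamma_tilde \<mu> g g' h xt u =
     ereal (lin_approx g g' xt u) + h u + ereal (\<mu> / 2 * (norm (u - xt))\<^sup>2)"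

text \<open>gamma_j, with xt = tilde x_j and yt = tilde y_{j+1}\<close>
definition gamma_lin :: "real \<Rightarrow> real \<Rightarrow> ('a::real_inner \<Rightarrow> real) \<Rightarrow> ('a \<Rightarrow> 'a) \<Rightarrow> ('a \<Rightarrow> ereal) \<Rightarrow> 'a \<Rightarrow> 'a \<Rightarrow> 'a \<Rightarrow> real" where
  "gamma_lin L \<mu> g g' h xt yt u =
     real_of_ereal (gamma_tilde \<mu> g g' h xt yt) + L * inner (xt - yt) (u - yt)
       + \<mu> / 2 * (norm (u - yt))\<^sup>2"

primrec Gamma :: "(nat \<Rightarrow> real) \<Rightarrow> (nat \<Rightarrow> real) \<Rightarrow> (nat \<Rightarrow> 'a \<Rightarrow> real) \<Rightarrow> nat \<Rightarrow> 'a \<Rightarrow> real" where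
  "Gamma A a gam 0 = (\<lambda>u. 0)"
| "Gamma A a gam (Suc j) = (\<lambda>u. (A j * Gamma A a gam j u + a j * gam j u) / A (Suc j))"

end

theory Submission
  imports Defs
begin

(* The prox-linear step makes yt = yt (Suc j) the minimiser of
   phi = gamma_tilde + L/2 ||. - xt||^2, the sum of a proper convex function and the quadratic
   (L + mu)/2 ||. - xt||^2.  Comparing phi at yt with phi along the segment from yt to any u
   gives the growth  phi u >= phi yt + (L + mu)/2 ||u - yt||^2.  The linearisation gamma is built
   so that  gamma + L/2 ||. - xt||^2 = phi yt + (L + mu)/2 ||. - yt||^2  holds identically; hence
   gamma <= gamma_tilde, both regularised problems have the value phi yt and the unique minimiser
   yt, while gamma_tilde <= psi is the strong-convexity lower bound of g at xt.
   Part (c) is an induction: A_k Gamma_k + ||. - x_0||^2/2 is always a constant plus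
   (A_k mu + 1)/2 ||. - x_k||^2, because adding a_k gamma_k and completing the square moves the
   centre exactly to the ACG update x_(k+1).  Dividing by A_(k+1) exhibits Gamma_(k+1) as
   mu/2 ||.||^2 plus an affine function. *)

section \<open>Quadratic and strongly convex functions\<close>

lemma norm_diff_power2:
  fixes u x :: "'a::real_inner"
  shows "(norm (u - x))\<^sup>2 = (norm u)\<^sup>2 - 2 * inner u x + (norm x)\<^sup>2"
  by (simp add: power2_norm_eq_inner inner_diff_left inner_diff_right inner_commute)

lemma norm_convex_combination_diff_power2:
  fixes w z x :: "'a::real_inner"
  shows "(norm (t *\<^sub>R w + (1 - t) *\<^sub>R z - x))\<^sup>2
     = t * (norm (w - x))\<^sup>2 + (1 - t) * (norm (z - x))\<^sup>2 - t * (1 - t) * (norm (w - z))\<^sup>2"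
proof -
  have "t *\<^sub>R w + (1 - t) *\<^sub>R z - x = t *\<^sub>R (w - x) + (1 - t) *\<^sub>R (z - x)"
    by (simp add: algebra_simps)
  moreover have "w - z = (w - x) - (z - x)" by simp
  ultimately show ?thesis
    by (simp only: power2_norm_eq_inner inner_add_left inner_add_right inner_diff_left
        inner_diff_right inner_scaleR_left inner_scaleR_right inner_commute[of "z - x" "w - x"])
      (simp add: algebra_simps power2_eq_square)
qed

lemma complete_square:
  fixes p q w z :: "'a::real_inner"
  assumes P: "P = B + C" and z: "P *\<^sub>R z = B *\<^sub>R p + C *\<^sub>R q - w"
  shows "\<exists>K. \<forall>u. B / 2 * (norm (u - p))\<^sup>2 + C / 2 * (norm (u - q))\<^sup>2 + inner w u
                = K + P / 2 * (norm (u - z))\<^sup>2"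
proof (intro exI allI)
  fix u
  have w: "inner w u = B * inner u p + C * inner u q - P * inner u z"
    using arg_cong[OF z, of "inner u"] by (simp add: inner_diff_right inner_add_right inner_commute)
  show "B / 2 * (norm (u - p))\<^sup>2 + C / 2 * (norm (u - q))\<^sup>2 + inner w u
      = (B / 2 * (norm p)\<^sup>2 + C / 2 * (norm q)\<^sup>2 - P / 2 * (norm z)\<^sup>2) + P / 2 * (norm (u - z))\<^sup>2"
    unfolding norm_diff_power2 w P by (simp add: field_simps)
qed

lemma affine_plus_sq_if_scaled_plus_sq:
  fixes p z :: "'a::real_inner"
  assumes B: "B > 0"
    and eq: "\<And>u. B * G u + (norm (u - p))\<^sup>2 / 2 = C + (B * \<mu> + 1) / 2 * (norm (u - z))\<^sup>2"
  shows "G = (\<lambda>u. (C + ((norm z)\<^sup>2 - (norm p)\<^sup>2) / 2) / B + inner ((p - z) /\<^sub>R B) u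
                 + \<mu> / 2 * (norm (u - z))\<^sup>2)"
proof
  fix u
  have "B * G u = C + (B * \<mu> + 1) / 2 * (norm (u - z))\<^sup>2 - (norm (u - p))\<^sup>2 / 2"
    using eq[of u] by linarith
  also have "\<dots> = C + ((norm z)\<^sup>2 - (norm p)\<^sup>2) / 2 + inner (p - z) u
      + B * (\<mu> / 2 * (norm (u - z))\<^sup>2)"
    unfolding norm_diff_power2
    by (simp add: inner_diff_left inner_diff_right inner_commute field_simps)
  finally have "G u = (C + ((norm z)\<^sup>2 - (norm p)\<^sup>2) / 2 + inner (p - z) u
      + B * (\<mu> / 2 * (norm (u - z))\<^sup>2)) / B"
    using B by (simp add: nonzero_eq_divide_eq mult.commute)
  then show "G u = (C + ((norm z)\<^sup>2 - (norm p)\<^sup>2) / 2) / B + inner ((p - z) /\<^sub>R B) u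
                 + \<mu> / 2 * (norm (u - z))\<^sup>2"
    using B by (simp add: add_divide_distrib inverse_eq_divide)
qed

lemma quadratic_fun_affine_plus_sq:
  fixes b d :: "'a::real_inner"
  shows "quadratic_fun (\<lambda>u. c + inner b u + \<mu> / 2 * (norm (u - d))\<^sup>2)"
  unfolding quadratic_fun_def
proof (intro exI conjI allI)
  show "linear (\<lambda>u::'a. \<mu> *\<^sub>R u)" by (rule linear_scale_self)
  fix u :: 'a
  show "c + inner b u + \<mu> / 2 * (norm (u - d))\<^sup>2
      = (c + \<mu> / 2 * (norm d)\<^sup>2) + inner (b - \<mu> *\<^sub>R d) u + inner u (\<mu> *\<^sub>R u) / 2"
    by (simp add: norm_diff_power2 power2_norm_eq_inner inner_diff_left inner_commute algebra_simps)
qed simp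

lemma strongly_convex_affine_plus_sq:
  fixes b d :: "'a::real_inner"
  shows "strongly_convex \<mu> (\<lambda>u. c + inner b u + \<mu> / 2 * (norm (u - d))\<^sup>2)"
  unfolding strongly_convex_def inner_add_right inner_scaleR_right
    norm_convex_combination_diff_power2
  by (simp add: field_simps)

lemma strongly_convex_gradient_lower_bound:
  fixes g :: "'a::real_inner \<Rightarrow> real"
  assumes sc: "strongly_convex \<mu> g" and grad: "GDERIV g x :> G"
  shows "g x + inner G (u - x) + \<mu> / 2 * (norm (u - x))\<^sup>2 \<le> g u"
proof -
  define v where "v = u - x"
  define bound where "bound t = g u - g x - (1 - t) * (\<mu> / 2) * (norm v)\<^sup>2" for t
  have line: "((\<lambda>t. x + t *\<^sub>R v) has_derivative (\<lambda>t. t *\<^sub>R v)) (at 0)"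
    by (auto intro!: derivative_eq_intros)
  have "(g has_derivative (\<lambda>h. inner h G)) (at (x + 0 *\<^sub>R v))"
    using grad by (simp add: gderiv_def)
  from has_derivative_compose[OF line this]
  have "((\<lambda>t. g (x + t *\<^sub>R v)) has_real_derivative inner G v) (at 0)"
    by (simp add: has_field_derivative_def inner_commute mult.commute[of _ "inner G v"])
  then have slope: "((\<lambda>t. (g (x + t *\<^sub>R v) - g x) / t) \<longlongrightarrow> inner G v) (at_right 0)"
    using tendsto_mono[OF at_le DERIV_D] by fastforce
  have chord: "\<forall>\<^sub>F t in at_right 0. (g (x + t *\<^sub>R v) - g x) / t \<le> bound t"
    using eventually_at_right_real[OF zero_less_one]
  proof (rule eventually_mono)
    fix t :: real
    assume t: "t \<in> {0<..<1}"
    have "g (t *\<^sub>R u + (1 - t) *\<^sub>R x)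
        \<le> t * g u + (1 - t) * g x - t * (1 - t) * (\<mu> / 2) * (norm (u - x))\<^sup>2"
      using sc t unfolding strongly_convex_def by auto
    moreover have "x + t *\<^sub>R v = t *\<^sub>R u + (1 - t) *\<^sub>R x"
      by (simp add: v_def algebra_simps)
    ultimately have "g (x + t *\<^sub>R v) - g x \<le> t * bound t"
      by (simp add: bound_def v_def algebra_simps)
    then show "(g (x + t *\<^sub>R v) - g x) / t \<le> bound t"
      using t by (simp add: divide_le_eq mult.commute)
  qed
  have "(bound \<longlongrightarrow> bound 0) (at_right 0)"
    unfolding bound_def by (intro tendsto_intros)
  from tendsto_le[OF _ this slope chord] show ?thesis
    by (simp add: bound_def v_def)
qed

section \<open>Minimisers with quadratic growth\<close>

lemma is_arg_min_imp_INF_eq: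
  fixes f :: "'a \<Rightarrow> 'b::conditionally_complete_linorder"
  assumes "is_arg_min f (\<lambda>_. True) z"
  shows "(INF u. f u) = f z"
proof -
  have le: "f z \<le> f u" for u using assms by (auto simp: is_arg_min_def not_less)
  then have "bdd_below (range f)" by (rule bdd_belowI2)
  then show ?thesis by (intro antisym cINF_lower cINF_greatest le) auto
qed

lemma is_arg_min_iff_quadratic_growth:
  fixes f :: "'a::real_normed_vector \<Rightarrow> ereal"
  assumes c: "c > 0" and finite: "\<bar>f z\<bar> \<noteq> \<infinity>"
    and growth: "\<And>u. f z + ereal (c * (norm (u - z))\<^sup>2) \<le> f u"
  shows "is_arg_min f (\<lambda>_. True) v \<longleftrightarrow> v = z"
proof
  assume "is_arg_min f (\<lambda>_. True) v"
  then have "f z + ereal (c * (norm (v - z))\<^sup>2) \<le> f z + 0"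
    using growth[of v] by (auto simp: is_arg_min_def not_less intro: order_trans)
  then have "c * (norm (v - z))\<^sup>2 \<le> 0"
    using finite by (cases "f z") (auto simp: zero_ereal_def)
  then show "v = z" using c by (simp add: mult_le_0_iff)
next
  assume "v = z"
  moreover have "f z \<le> f u" for u
  proof -
    have "f z \<le> f z + ereal (c * (norm (u - z))\<^sup>2)"
      using c by (intro ereal_le_add_self) simp
    also note growth[of u]
    finally show ?thesis .
  qed
  ultimately show "is_arg_min f (\<lambda>_. True) v" by (auto simp: is_arg_min_def not_less)
qed

lemma is_arg_min_const_plus_sq_iff:
  fixes z :: "'a::real_normed_vector"
  assumes "c > 0"
  shows "is_arg_min (\<lambda>u. C + c * (norm (u - z))\<^sup>2) (\<lambda>_. True) v \<longleftrightarrow> v = z"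
  using is_arg_min_iff_quadratic_growth[of c "\<lambda>u. ereal (C + c * (norm (u - z))\<^sup>2)" z v] assms
  by (simp add: is_arg_min_def)

section \<open>Proximal steps for convex extended-real functions\<close>

definition ereal_convex :: "('a::real_vector \<Rightarrow> ereal) \<Rightarrow> bool" where
  "ereal_convex F \<longleftrightarrow>
     (\<forall>x y t. 0 < t \<and> t < 1 \<longrightarrow> F (t *\<^sub>R x + (1 - t) *\<^sub>R y) \<le> ereal t * F x + ereal (1 - t) * F y)"

lemma ereal_convex_add_affine:
  assumes F: "ereal_convex F"
    and affine: "\<And>x y t. l (t *\<^sub>R x + (1 - t) *\<^sub>R y) = t * l x + (1 - t) * l y"
  shows "ereal_convex (\<lambda>u. ereal (l u) + F u)"
  unfolding ereal_convex_def
proof (intro allI impI)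
  fix x y :: 'a and t :: real
  assume t: "0 < t \<and> t < 1"
  have distrib: "ereal s * (ereal (l z) + F z) = ereal (s * l z) + ereal s * F z" for s z
    by (subst ereal_distrib_left) auto
  have "F (t *\<^sub>R x + (1 - t) *\<^sub>R y) \<le> ereal t * F x + ereal (1 - t) * F y"
    using F t unfolding ereal_convex_def by blast
  then have "ereal (l (t *\<^sub>R x + (1 - t) *\<^sub>R y)) + F (t *\<^sub>R x + (1 - t) *\<^sub>R y)
      \<le> ereal (t * l x) + ereal ((1 - t) * l y) + (ereal t * F x + ereal (1 - t) * F y)"
    unfolding affine plus_ereal.simps(1)[symmetric] by (rule add_left_mono)
  also have "\<dots> = ereal t * (ereal (l x) + F x) + ereal (1 - t) * (ereal (l y) + F y)"
    unfolding distrib by (simp only: ac_simps)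
  finally show "ereal (l (t *\<^sub>R x + (1 - t) *\<^sub>R y)) + F (t *\<^sub>R x + (1 - t) *\<^sub>R y)
      \<le> ereal t * (ereal (l x) + F x) + ereal (1 - t) * (ereal (l y) + F y)" .
qed

lemma lin_approx_affine:
  "lin_approx g g' x (t *\<^sub>R u + (1 - t) *\<^sub>R v)
     = t * lin_approx g g' x u + (1 - t) * lin_approx g g' x v"
  by (simp add: lin_approx_def inner_add_right inner_diff_right algebra_simps)

lemma prox_quadratic_growth:
  fixes F :: "'a::real_inner \<Rightarrow> ereal"
  assumes conv: "ereal_convex F" and proper: "\<And>u. F u \<noteq> -\<infinity>" and c: "c \<ge> 0"
    and min: "is_arg_min (\<lambda>u. F u + ereal (c * (norm (u - X))\<^sup>2)) (\<lambda>_. True) Y"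
    and finite: "F Y \<noteq> \<infinity>"
  shows "F Y + ereal (c * (norm (Y - X))\<^sup>2) + ereal (c * (norm (u - Y))\<^sup>2)
           \<le> F u + ereal (c * (norm (u - X))\<^sup>2)"
proof (cases "F u")
  case (real r)
  obtain H where H: "F Y = ereal H" using finite proper by (cases "F Y") auto
  have Y_le: "F Y + ereal (c * (norm (Y - X))\<^sup>2) \<le> F p + ereal (c * (norm (p - X))\<^sup>2)" for p
    using min by (auto simp: is_arg_min_def not_less)
  \<comment> \<open>compare Y with the points of the segment from Y to u, then let them approach Y\<close>
  define gap where "gap = r + c * (norm (u - X))\<^sup>2 - (H + c * (norm (Y - X))\<^sup>2)"
  have shrink: "(1 - t) * (c * (norm (u - Y))\<^sup>2) \<le> gap" if t: "0 < t" "t < 1" for t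
  proof -
    define p where "p = t *\<^sub>R u + (1 - t) *\<^sub>R Y"
    have "F p \<le> ereal t * F u + ereal (1 - t) * F Y"
      using conv t unfolding ereal_convex_def p_def by blast
    then obtain q where q: "F p = ereal q" "q \<le> t * r + (1 - t) * H"
      using proper[of p] by (cases "F p") (auto simp: real H)
    have "H + c * (norm (Y - X))\<^sup>2 \<le> q + c * (norm (p - X))\<^sup>2"
      using Y_le[of p] by (simp add: H q)
    also have "\<dots> \<le> t * r + (1 - t) * H
        + c * (t * (norm (u - X))\<^sup>2 + (1 - t) * (norm (Y - X))\<^sup>2 - t * (1 - t) * (norm (u - Y))\<^sup>2)"
      using q unfolding p_def norm_convex_combination_diff_power2 by simp
    finally have "t * ((1 - t) * (c * (norm (u - Y))\<^sup>2)) \<le> t * gap"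
      by (simp add: gap_def algebra_simps)
    then show ?thesis using t by simp
  qed
  have "c * (norm (u - Y))\<^sup>2 \<le> gap"
  proof (rule field_le_mult_one_interval)
    fix z :: real
    assume "0 < z" "z < 1"
    then show "z * (c * (norm (u - Y))\<^sup>2) \<le> gap"
      using shrink[of "1 - z"] by simp
  qed
  then show ?thesis by (simp add: gap_def real H)
qed (use proper in auto)

section \<open>The lower models of one ACG iteration\<close>

lemma gamma_tilde_le_psi:
  assumes "strongly_convex \<mu> g" and "GDERIV g X :> g' X"
  shows "gamma_tilde \<mu> g g' h X u \<le> psi g h u"
proof -
  have "lin_approx g g' X u + \<mu> / 2 * (norm (u - X))\<^sup>2 \<le> g u"
    using strongly_convex_gradient_lower_bound[OF assms] by (simp add: lin_approx_def)
  then show ?thesis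
    by (cases "h u") (simp_all add: gamma_tilde_def psi_def algebra_simps)
qed

lemma gamma_tilde_plus_sq:
  "gamma_tilde \<mu> g g' h X u + ereal (L / 2 * (norm (u - X))\<^sup>2)
     = ereal (lin_approx g g' X u) + h u + ereal ((L + \<mu>) / 2 * (norm (u - X))\<^sup>2)"
  by (cases "h u") (simp_all add: gamma_tilde_def add_divide_distrib distrib_right)

lemma gamma_lin_eq_affine_plus_sq:
  "gamma_lin L \<mu> g g' h X Y = (\<lambda>u. (real_of_ereal (gamma_tilde \<mu> g g' h X Y) - L * inner (X - Y) Y)
      + inner (L *\<^sub>R (X - Y)) u + \<mu> / 2 * (norm (u - Y))\<^sup>2)"
  by (simp add: gamma_lin_def inner_diff_right fun_eq_iff algebra_simps)

lemma quadratic_fun_gamma_lin: "quadratic_fun (gamma_lin L \<mu> g g' h X Y)"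
  unfolding gamma_lin_eq_affine_plus_sq by (rule quadratic_fun_affine_plus_sq)

lemma strongly_convex_gamma_lin: "strongly_convex \<mu> (gamma_lin L \<mu> g g' h X Y)"
  unfolding gamma_lin_eq_affine_plus_sq by (rule strongly_convex_affine_plus_sq)

lemma gamma_lin_at_Y: "gamma_lin L \<mu> g g' h X Y Y = real_of_ereal (gamma_tilde \<mu> g g' h X Y)"
  by (simp add: gamma_lin_def)

lemma gamma_lin_plus_sq:
  "gamma_lin L \<mu> g g' h X Y u + L / 2 * (norm (u - X))\<^sup>2
     = real_of_ereal (gamma_tilde \<mu> g g' h X Y) + L / 2 * (norm (Y - X))\<^sup>2
       + (L + \<mu>) / 2 * (norm (u - Y))\<^sup>2"
proof -
  have "(norm (u - X))\<^sup>2 = (norm (u - Y))\<^sup>2 + 2 * inner (X - Y) (Y - u) + (norm (Y - X))\<^sup>2"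
    by (simp add: power2_norm_eq_inner inner_diff_left inner_diff_right inner_commute)
  then show ?thesis
    by (simp only: gamma_lin_def)
      (simp add: inner_diff_left inner_diff_right inner_commute algebra_simps)
qed

locale acg_prox_step =
  fixes \<mu> L :: real and g :: "'a::real_inner \<Rightarrow> real" and g' :: "'a \<Rightarrow> 'a"
    and h :: "'a \<Rightarrow> ereal" and X Y :: 'a
  assumes L_plus_mu_pos: "0 < L + \<mu>"
    and h_pcc: "proper_closed_convex h"
    and Y_min: "is_arg_min
        (\<lambda>u. ereal (lin_approx g g' X u) + h u + ereal ((L + \<mu>) / 2 * (norm (u - X))\<^sup>2))
        (\<lambda>_. True) Y"
begin

abbreviation prox_objective :: "'a \<Rightarrow> ereal" where
  "prox_objective u \<equiv> ereal (lin_approx g g' X u) + h u + ereal ((L + \<mu>) / 2 * (norm (u - X))\<^sup>2)"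

lemma h_not_MInfty: "h u \<noteq> -\<infinity>"
  using h_pcc by (simp add: proper_closed_convex_def)

lemma h_Y_not_PInfty: "h Y \<noteq> \<infinity>"
proof -
  obtain x where "h x \<noteq> \<infinity>"
    using h_pcc by (auto simp: proper_closed_convex_def)
  then have "prox_objective x \<noteq> \<infinity>"
    using h_not_MInfty[of x] by (cases "h x") auto
  moreover have "prox_objective Y \<le> prox_objective x"
    using Y_min by (auto simp: is_arg_min_def not_less)
  ultimately have "prox_objective Y \<noteq> \<infinity>" by (auto simp: top_ereal_def[symmetric] top_unique)
  then show ?thesis by auto
qed

lemma prox_objective_growth:
  "prox_objective Y + ereal ((L + \<mu>) / 2 * (norm (u - Y))\<^sup>2) \<le> prox_objective u"
proof -
  have "ereal_convex h"
    using h_pcc by (simp add: proper_closed_convex_def ereal_convex_def)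
  then have "ereal_convex (\<lambda>u. ereal (lin_approx g g' X u) + h u)"
    by (rule ereal_convex_add_affine) (rule lin_approx_affine)
  from prox_quadratic_growth[OF this _ _ Y_min] show ?thesis
    using h_not_MInfty h_Y_not_PInfty L_plus_mu_pos by simp
qed

lemma gamma_tilde_Y_finite: "\<bar>gamma_tilde \<mu> g g' h X Y\<bar> \<noteq> \<infinity>"
  using h_Y_not_PInfty h_not_MInfty[of Y] by (cases "h Y") (simp_all add: gamma_tilde_def)

lemma gamma_tilde_at_Y: "gamma_tilde \<mu> g g' h X Y = ereal (gamma_lin L \<mu> g g' h X Y Y)"
  by (simp add: gamma_lin_at_Y ereal_real' gamma_tilde_Y_finite)

lemma prox_objective_at_Y:
  "prox_objective Y = ereal (real_of_ereal (gamma_tilde \<mu> g g' h X Y) + L / 2 * (norm (Y - X))\<^sup>2)"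
  by (simp only: plus_ereal.simps(1)[symmetric] ereal_real'[OF gamma_tilde_Y_finite]
      gamma_tilde_plus_sq)

lemma gamma_lin_le_gamma_tilde: "ereal (gamma_lin L \<mu> g g' h X Y u) \<le> gamma_tilde \<mu> g g' h X u"
proof -
  have "ereal (gamma_lin L \<mu> g g' h X Y u) + ereal (L / 2 * (norm (u - X))\<^sup>2)
      = prox_objective Y + ereal ((L + \<mu>) / 2 * (norm (u - Y))\<^sup>2)"
    unfolding prox_objective_at_Y plus_ereal.simps(1) gamma_lin_plus_sq ..
  also have "\<dots> \<le> gamma_tilde \<mu> g g' h X u + ereal (L / 2 * (norm (u - X))\<^sup>2)"
    unfolding gamma_tilde_plus_sq by (rule prox_objective_growth)
  finally show ?thesis
    unfolding ereal_add_le_add_iff2 by simp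
qed

lemma is_arg_min_gamma_tilde_plus_sq_iff:
  "is_arg_min (\<lambda>u. gamma_tilde \<mu> g g' h X u + ereal (L / 2 * (norm (u - X))\<^sup>2)) (\<lambda>_. True) v
     \<longleftrightarrow> v = Y"
  unfolding gamma_tilde_plus_sq
proof (rule is_arg_min_iff_quadratic_growth)
  show "0 < (L + \<mu>) / 2" using L_plus_mu_pos by simp
  show "\<bar>prox_objective Y\<bar> \<noteq> \<infinity>" unfolding prox_objective_at_Y by simp
qed (rule prox_objective_growth)

lemma is_arg_min_gamma_lin_plus_sq_iff:
  "is_arg_min (\<lambda>u. gamma_lin L \<mu> g g' h X Y u + L / 2 * (norm (u - X))\<^sup>2) (\<lambda>_. True) v
     \<longleftrightarrow> v = Y"
  unfolding gamma_lin_plus_sq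
  by (rule is_arg_min_const_plus_sq_iff) (use L_plus_mu_pos in simp)

lemma INF_gamma_tilde_plus_sq_eq:
  "(INF u. gamma_tilde \<mu> g g' h X u + ereal (L / 2 * (norm (u - X))\<^sup>2))
     = ereal (INF u. gamma_lin L \<mu> g g' h X Y u + L / 2 * (norm (u - X))\<^sup>2)"
  using is_arg_min_imp_INF_eq[OF is_arg_min_gamma_tilde_plus_sq_iff[of Y, THEN iffD2, OF refl]]
    is_arg_min_imp_INF_eq[OF is_arg_min_gamma_lin_plus_sq_iff[of Y, THEN iffD2, OF refl]]
  by (simp add: gamma_tilde_at_Y)

end

section \<open>The estimate sequence of the ACG method\<close>

lemma larger_root_sq:
  fixes \<tau> A a :: real
  assumes nonneg: "0 \<le> \<tau>\<^sup>2 + 4 * \<tau> * A" and a: "a = (\<tau> + sqrt (\<tau>\<^sup>2 + 4 * \<tau> * A)) / 2"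
  shows "a\<^sup>2 = \<tau> * (A + a)"
proof -
  have "(sqrt (\<tau>\<^sup>2 + 4 * \<tau> * A))\<^sup>2 = \<tau>\<^sup>2 + 4 * \<tau> * A" using nonneg by simp
  then show ?thesis unfolding a by (simp add: power2_eq_square field_simps)
qed

locale acg_weights =
  fixes \<mu> L :: real and A a \<tau> :: "nat \<Rightarrow> real"
  assumes mu_pos: "\<mu> > 0" and L_pos: "L > 0"
    and A_0: "A 0 = 0" and tau_0: "\<tau> 0 = 1 / L"
    and a_def: "\<And>i. a i = (\<tau> i + sqrt ((\<tau> i)\<^sup>2 + 4 * \<tau> i * A i)) / 2"
    and tau_Suc: "\<And>i. \<tau> (Suc i) = \<tau> i + \<mu> * a i / L"
    and A_Suc: "\<And>i. A (Suc i) = A i + a i"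
begin

lemma tau_mult_L: "\<tau> i * L = A i * \<mu> + 1"
  by (induction i) (use L_pos in \<open>simp_all add: A_0 tau_0 tau_Suc A_Suc algebra_simps\<close>)

lemma tau_pos_if_A_nonneg:
  assumes "A i \<ge> 0"
  shows "\<tau> i > 0"
proof -
  have "\<tau> i * L > 0"
    using tau_mult_L[of i] assms mu_pos by (simp add: add_nonneg_pos)
  with L_pos show ?thesis by (simp add: zero_less_mult_iff)
qed

lemma A_nonneg: "A i \<ge> 0"
proof (induction i)
  case (Suc i)
  with tau_pos_if_A_nonneg have "\<tau> i > 0" by blast
  with Suc have "a i \<ge> 0" by (simp add: a_def)
  with Suc show ?case by (simp add: A_Suc)
qed (simp add: A_0)

lemma tau_pos: "\<tau> i > 0"
  using tau_pos_if_A_nonneg A_nonneg by blast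

lemma a_pos: "a i > 0"
  using tau_pos[of i] A_nonneg[of i] by (simp add: a_def add_pos_nonneg)

lemma A_Suc_pos: "A (Suc i) > 0"
  using A_nonneg[of i] a_pos[of i] by (simp add: A_Suc)

lemma a_sq: "(a i)\<^sup>2 = \<tau> i * A (Suc i)"
  using larger_root_sq[OF _ a_def] tau_pos[of i] A_nonneg[of i] by (simp add: A_Suc)

end

locale acg_sequences = acg_weights +
  fixes x y xt yt :: "nat \<Rightarrow> 'a::real_inner" and D :: "nat \<Rightarrow> real" and gam :: "nat \<Rightarrow> 'a \<Rightarrow> real"
  assumes xt_def: "\<And>i. xt i = (A i / A (Suc i)) *\<^sub>R y i + (a i / A (Suc i)) *\<^sub>R x i"
    and x_Suc: "\<And>i. x (Suc i) = (1 / (A (Suc i) * \<mu> + 1)) *\<^sub>R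
          (((L + \<mu>) * a i) *\<^sub>R yt (Suc i) - (A i * a i * L / A (Suc i)) *\<^sub>R y i)"
    and gam_def: "\<And>i u. gam i u = D i + L * inner (xt i - yt (Suc i)) (u - yt (Suc i))
          + \<mu> / 2 * (norm (u - yt (Suc i)))\<^sup>2"
begin

lemma x_Suc_eq:
  "(A (Suc k) * \<mu> + 1) *\<^sub>R x (Suc k)
     = (A k * \<mu> + 1) *\<^sub>R x k + (a k * \<mu>) *\<^sub>R yt (Suc k) - (a k * L) *\<^sub>R (xt k - yt (Suc k))"
proof -
  have weight: "a k * L * (a k / A (Suc k)) = A k * \<mu> + 1"
    using a_sq[of k] tau_mult_L[of k] A_Suc_pos[of k] by (simp add: power2_eq_square field_simps)
  have "A (Suc k) * \<mu> + 1 > 0"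
    using A_Suc_pos[of k] mu_pos by (simp add: add_pos_pos)
  then have "(A (Suc k) * \<mu> + 1) *\<^sub>R x (Suc k)
      = ((L + \<mu>) * a k) *\<^sub>R yt (Suc k) - (A k * a k * L / A (Suc k)) *\<^sub>R y k"
    by (simp add: x_Suc)
  also have "\<dots> = (a k * L * (a k / A (Suc k))) *\<^sub>R x k + (a k * \<mu>) *\<^sub>R yt (Suc k)
      - (a k * L) *\<^sub>R (xt k - yt (Suc k))"
    by (simp add: xt_def algebra_simps)
  finally show ?thesis unfolding weight .
qed

lemma Gamma_plus_sq_eq:
  "\<exists>C. \<forall>u. A k * Gamma A a gam k u + (norm (u - x 0))\<^sup>2 / 2
           = C + (A k * \<mu> + 1) / 2 * (norm (u - x k))\<^sup>2"
proof (induction k)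
  case 0
  show ?case by (simp add: A_0)
next
  case (Suc k)
  then obtain C where C: "\<And>u. A k * Gamma A a gam k u + (norm (u - x 0))\<^sup>2 / 2
      = C + (A k * \<mu> + 1) / 2 * (norm (u - x k))\<^sup>2"
    by blast
  let ?Y = "yt (Suc k)"
  have P: "A (Suc k) * \<mu> + 1 = (A k * \<mu> + 1) + a k * \<mu>"
    by (simp add: A_Suc algebra_simps)
  obtain K where K: "\<And>u. (A k * \<mu> + 1) / 2 * (norm (u - x k))\<^sup>2 + a k * \<mu> / 2 * (norm (u - ?Y))\<^sup>2
      + inner ((a k * L) *\<^sub>R (xt k - ?Y)) u
      = K + (A (Suc k) * \<mu> + 1) / 2 * (norm (u - x (Suc k)))\<^sup>2"
    using complete_square[OF P x_Suc_eq] by blast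
  have "A (Suc k) * Gamma A a gam (Suc k) u + (norm (u - x 0))\<^sup>2 / 2
      = (A k * Gamma A a gam k u + (norm (u - x 0))\<^sup>2 / 2) + a k * gam k u" for u
    using A_Suc_pos[of k] by simp
  also have "\<dots> u = (C + a k * D k - a k * L * inner (xt k - ?Y) ?Y)
      + ((A k * \<mu> + 1) / 2 * (norm (u - x k))\<^sup>2 + a k * \<mu> / 2 * (norm (u - ?Y))\<^sup>2
         + inner ((a k * L) *\<^sub>R (xt k - ?Y)) u)" for u
    unfolding C gam_def by (simp add: inner_diff_right algebra_simps)
  finally have "A (Suc k) * Gamma A a gam (Suc k) u + (norm (u - x 0))\<^sup>2 / 2
      = (C + a k * D k - a k * L * inner (xt k - ?Y) ?Y + K)
        + (A (Suc k) * \<mu> + 1) / 2 * (norm (u - x (Suc k)))\<^sup>2" for u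
    unfolding K by simp
  then show ?case by blast
qed


lemma is_arg_min_Gamma_plus_sq_iff:
  "is_arg_min (\<lambda>u. A k * Gamma A a gam k u + (norm (u - x 0))\<^sup>2 / 2) (\<lambda>_. True) v \<longleftrightarrow> v = x k"
proof -
  obtain C where "\<forall>u. A k * Gamma A a gam k u + (norm (u - x 0))\<^sup>2 / 2
      = C + (A k * \<mu> + 1) / 2 * (norm (u - x k))\<^sup>2"
    using Gamma_plus_sq_eq by blast
  then have "(\<lambda>u. A k * Gamma A a gam k u + (norm (u - x 0))\<^sup>2 / 2)
      = (\<lambda>u. C + (A k * \<mu> + 1) / 2 * (norm (u - x k))\<^sup>2)"
    by blast
  moreover have "(A k * \<mu> + 1) / 2 > 0"
    using A_nonneg[of k] mu_pos by (simp add: add_nonneg_pos)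
  ultimately show ?thesis by (simp only: is_arg_min_const_plus_sq_iff)
qed

lemma Gamma_Suc_eq_affine_plus_sq:
  "\<exists>c b. Gamma A a gam (Suc k) = (\<lambda>u. c + inner b u + \<mu> / 2 * (norm (u - x (Suc k)))\<^sup>2)"
proof -
  obtain C where "\<And>u. A (Suc k) * Gamma A a gam (Suc k) u + (norm (u - x 0))\<^sup>2 / 2
      = C + (A (Suc k) * \<mu> + 1) / 2 * (norm (u - x (Suc k)))\<^sup>2"
    using Gamma_plus_sq_eq by blast
  from affine_plus_sq_if_scaled_plus_sq[OF A_Suc_pos this] show ?thesis by blast
qed

lemma quadratic_fun_Gamma_Suc: "quadratic_fun (Gamma A a gam (Suc k))"
  using Gamma_Suc_eq_affine_plus_sq quadratic_fun_affine_plus_sq by metis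

lemma strongly_convex_Gamma_Suc: "strongly_convex \<mu> (Gamma A a gam (Suc k))"
  using Gamma_Suc_eq_affine_plus_sq strongly_convex_affine_plus_sq by metis

end

theorem lemma2p2:
  fixes \<mu> L :: real
    and g :: "'a::euclidean_space \<Rightarrow> real" and g' :: "'a \<Rightarrow> 'a"
    and h :: "'a \<Rightarrow> ereal"
    and x y xt yt :: "nat \<Rightarrow> 'a"
    and A a \<tau> :: "nat \<Rightarrow> real"
    and j :: nat
  assumes mu_pos: "\<mu> > 0" and L_pos: "L > 0"
    and g_sc: "strongly_convex \<mu> g"
    and g_smooth: "smooth_with_gradient (L + \<mu>) g g'"
    and h_pcc: "proper_closed_convex h"
    and A0: "A 0 = 0" and tau0: "\<tau> 0 = 1 / L" and y0: "y 0 = x 0"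
    and a_def: "\<And>i. a i = (\<tau> i + sqrt ((\<tau> i)\<^sup>2 + 4 * \<tau> i * A i)) / 2"
    and tau_rec: "\<And>i. \<tau> (Suc i) = \<tau> i + \<mu> * a i / L"
    and A_rec: "\<And>i. A (Suc i) = A i + a i"
    and xt_def: "\<And>i. xt i = (A i / A (Suc i)) *\<^sub>R y i + (a i / A (Suc i)) *\<^sub>R x i"
    and yt_def: "\<And>i. is_arg_min
        (\<lambda>u. ereal (lin_approx g g' (xt i) u) + h u + ereal ((L + \<mu>) / 2 * (norm (u - xt i))\<^sup>2))
        (\<lambda>_. True) (yt (Suc i))"
    and y_rec: "\<And>i. y (Suc i) \<in> {y i, yt (Suc i)} \<and>
        psi g h (y (Suc i)) \<le> psi g h (y i) \<and> psi g h (y (Suc i)) \<le> psi g h (yt (Suc i))"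
    and x_rec: "\<And>i. x (Suc i) =
        (1 / (A (Suc i) * \<mu> + 1)) *\<^sub>R
          (((L + \<mu>) * a i) *\<^sub>R yt (Suc i) - (A i * a i * L / A (Suc i)) *\<^sub>R y i)"
  shows
    "(\<forall>u. ereal (gamma_lin L \<mu> g g' h (xt j) (yt (Suc j)) u) \<le> gamma_tilde \<mu> g g' h (xt j) u
          \<and> gamma_tilde \<mu> g g' h (xt j) u \<le> psi g h u)
     \<and> gamma_tilde \<mu> g g' h (xt j) (yt (Suc j))
          = ereal (gamma_lin L \<mu> g g' h (xt j) (yt (Suc j)) (yt (Suc j)))
     \<and> (INF u. gamma_tilde \<mu> g g' h (xt j) u + ereal (L / 2 * (norm (u - xt j))\<^sup>2))
          = ereal (INF u. gamma_lin L \<mu> g g' h (xt j) (yt (Suc j)) u + L / 2 * (norm (u - xt j))\<^sup>2)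
     \<and> (\<forall>v. is_arg_min (\<lambda>u. gamma_tilde \<mu> g g' h (xt j) u + ereal (L / 2 * (norm (u - xt j))\<^sup>2))
              (\<lambda>_. True) v \<longleftrightarrow> v = yt (Suc j))
     \<and> (\<forall>v. is_arg_min (\<lambda>u. gamma_lin L \<mu> g g' h (xt j) (yt (Suc j)) u + L / 2 * (norm (u - xt j))\<^sup>2)
              (\<lambda>_. True) v \<longleftrightarrow> v = yt (Suc j))
     \<and> quadratic_fun (gamma_lin L \<mu> g g' h (xt j) (yt (Suc j)))
     \<and> strongly_convex \<mu> (gamma_lin L \<mu> g g' h (xt j) (yt (Suc j)))
     \<and> quadratic_fun (Gamma A a (\<lambda>i. gamma_lin L \<mu> g g' h (xt i) (yt (Suc i))) (Suc j))
     \<and> strongly_convex \<mu> (Gamma A a (\<lambda>i. gamma_lin L \<mu> g g' h (xt i) (yt (Suc i))) (Suc j))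
     \<and> (\<forall>v. is_arg_min (\<lambda>u. A j * Gamma A a (\<lambda>i. gamma_lin L \<mu> g g' h (xt i) (yt (Suc i))) j u
                          + (norm (u - x 0))\<^sup>2 / 2) (\<lambda>_. True) v \<longleftrightarrow> v = x j)"
proof -
  interpret step: acg_prox_step \<mu> L g g' h "xt j" "yt (Suc j)"
    using mu_pos L_pos h_pcc yt_def by unfold_locales auto
  interpret seq: acg_sequences \<mu> L A a \<tau> x y xt yt
      "\<lambda>i. real_of_ereal (gamma_tilde \<mu> g g' h (xt i) (yt (Suc i)))"
      "\<lambda>i. gamma_lin L \<mu> g g' h (xt i) (yt (Suc i))"
    by unfold_locales (fact mu_pos L_pos A0 tau0 a_def tau_rec A_rec xt_def x_rec gamma_lin_def)+
  have grad: "GDERIV g (xt j) :> g' (xt j)"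
    using g_smooth by (simp add: smooth_with_gradient_def)
  show ?thesis
    using step.gamma_lin_le_gamma_tilde
      gamma_tilde_le_psi[where X = "xt j" and g' = g', OF g_sc grad]
      step.gamma_tilde_at_Y step.INF_gamma_tilde_plus_sq_eq step.is_arg_min_gamma_tilde_plus_sq_iff
      step.is_arg_min_gamma_lin_plus_sq_iff seq.is_arg_min_Gamma_plus_sq_iff
      quadratic_fun_gamma_lin strongly_convex_gamma_lin
      seq.quadratic_fun_Gamma_Suc seq.strongly_convex_Gamma_Suc
    by (intro conjI allI) simp_all
qed

end
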